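(* Let $I$ be a nontrivial real interval and let $g\colon I^*\to I$ be a function. The following assertions are equivalent: (i) $g$ is associative (in the sense defined in the context); (ii) $g(\mathbf{x}\,g(\mathbf{y})\,\mathbf{z})=g(\mathbf{x}'\,g(\mathbf{y}')\,\mathbf{z}')$ for all strings $\mathbf{x},\mathbf{y},\mathbf{z},\mathbf{x}',\mathbf{y}',\mathbf{z}'\in I^*$ such that $\mathbf{x}\mathbf{y}\mathbf{z}=\mathbf{x}'\mathbf{y}'\mathbf{z}'$; (iii) $g(\mathbf{x}\,g(\mathbf{y})\,\mathbf{z})=g(\mathbf{x}\mathbf{y}\mathbf{z})$ for all $\mathbf{x},\mathbf{y},\mathbf{z}\in I^*$; (iv) $g(g(\mathbf{x})\,g(\mathbf{y}))=g(\mathbf{x}\mathbf{y})$ for all $\mathbf{x},\mathbf{y}\in I^*$.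
   Context: Tuples in $I^m$ are regarded as strings of length $m$ over $I$; $\varepsilon$ denotes the empty string, $I^0=\{\varepsilon\}$, and $I^*=\bigcup_{m\ge 0}I^m$, endowed with concatenation written by juxtaposition. For $g\colon I^*\to I$, $g_m$ denotes the restriction of $g$ to $I^m$, with the convention $g_0(\varepsilon)=\varepsilon$ (so that a $g(\varepsilon)$ appearing inside a string is the empty string). A binary function $h\colon I^2\to I$ is associative if $h(h(xy)z)=h(x\,h(yz))$ for all $x,y,z\in I$. A function $g\colon I^*\to I$ is called associative if (a) $g_2$ is associative; (b) for every $m>2$ and $x_1,\dots,x_m\in I$, $g_m(x_1\cdots x_m)=g_2(g_2(\cdots g_2(g_2(x_1x_2)x_3)\cdots)x_m)$; and (c) $g_1\circ g=g$ and $g(\mathbf{x}\,g_1(y)\,\mathbf{z})=g(\mathbf{x}y\mathbf{z})$ for all $\mathbf{x},\mathbf{z}\in I^*$, $y\in I$. *)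

theory Defs
  imports "HOL-Analysis.Analysis"
begin

text \<open>A function g : I* -> I is modelled by
  g :: real list => real, constrained on nonempty lists over I; following
  the paper's convention g(epsilon) = epsilon, the value of g as a string
  is given by gstr: the empty string on the empty input and the
  one-letter string [g xs] otherwise.\<close>

definition gstr :: "(real list \<Rightarrow> real) \<Rightarrow> real list \<Rightarrow> real list" where
  "gstr g xs = (if xs = [] then [] else [g xs])"

definition maps_into :: "real set \<Rightarrow> (real list \<Rightarrow> real) \<Rightarrow> bool" where
  "maps_into I g \<longleftrightarrow> (\<forall>xs\<in>lists I. xs \<noteq> [] \<longrightarrow> g xs \<in> I)"

definition assoc_binary :: "real set \<Rightarrow> (real \<Rightarrow> real \<Rightarrow> real) \<Rightarrow> bool" where
  "assoc_binary I h \<longleftrightarrow> (\<forall>x\<in>I. \<forall>y\<in>I. \<forall>z\<in>I. h (h x y) z = h x (h y z))"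

definition associative_fun :: "real set \<Rightarrow> (real list \<Rightarrow> real) \<Rightarrow> bool" where
  "associative_fun I g \<longleftrightarrow>
     assoc_binary I (\<lambda>x y. g [x, y])
   \<and> (\<forall>xs\<in>lists I. length xs > 2 \<longrightarrow> g xs = foldl (\<lambda>a b. g [a, b]) (hd xs) (tl xs))
   \<and> (\<forall>xs\<in>lists I. gstr g (gstr g xs) = gstr g xs)
   \<and> (\<forall>xs\<in>lists I. \<forall>y\<in>I. \<forall>zs\<in>lists I.
        gstr g (xs @ [g [y]] @ zs) = gstr g (xs @ [y] @ zs))"

end

theory Submission
  imports Defs
begin

text \<open>All four conditions are compared with (iii). An associative g agrees on strings of
  length at least 2 with the left fold of its binary part, and a fold of an associative
  operation may replace any nonempty factor by its own fold; this gives (iii). Conversely,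
  (iii) applied to prefixes rebuilds g as that fold. Condition (ii) is (iii) with the
  reduction moved around the same string, and (iv) follows from (iii) by reducing one block
  at a time, while (iii) follows from (iv) using idempotence g(g x) = g x.\<close>

lemma foldl_assoc_on:
  assumes "assoc_binary I h" and "\<And>a b. a \<in> I \<Longrightarrow> b \<in> I \<Longrightarrow> h a b \<in> I"
    and "x \<in> I" "y \<in> I" "zs \<in> lists I"
  shows "foldl h (h x y) zs = h x (foldl h y zs)"
  using assms(3-)
proof (induction zs arbitrary: y)
  case (Cons c zs)
  have "h (h x y) c = h x (h y c)"
    using assms(1) Cons.prems unfolding assoc_binary_def by auto
  then show ?case using Cons assms(2) by simp
qed simp

lemma foldl_closed:
  assumes "\<And>a b. a \<in> I \<Longrightarrow> b \<in> I \<Longrightarrow> h a b \<in> I"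
  shows "a \<in> I \<Longrightarrow> zs \<in> lists I \<Longrightarrow> foldl h a zs \<in> I"
  by (induction zs arbitrary: a) (auto simp: assms)

fun foldl1 :: "('a \<Rightarrow> 'a \<Rightarrow> 'a) \<Rightarrow> 'a list \<Rightarrow> 'a" where
  "foldl1 h (x # xs) = foldl h x xs"

lemma foldl_eq_foldl1:
  assumes "assoc_binary I h" and "\<And>a b. a \<in> I \<Longrightarrow> b \<in> I \<Longrightarrow> h a b \<in> I"
    and "a \<in> I" "ys \<in> lists I" "ys \<noteq> []"
  shows "foldl h a ys = h a (foldl1 h ys)"
  using assms by (cases ys) (auto intro: foldl_assoc_on)

lemma foldl1_flatten:
  assumes "assoc_binary I h" and "\<And>a b. a \<in> I \<Longrightarrow> b \<in> I \<Longrightarrow> h a b \<in> I"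
    and "xs \<in> lists I" "ys \<in> lists I" "ys \<noteq> []"
  shows "foldl1 h (xs @ [foldl1 h ys] @ zs) = foldl1 h (xs @ ys @ zs)"
proof (cases xs)
  case Nil
  then show ?thesis using \<open>ys \<noteq> []\<close> by (cases ys) auto
next
  case (Cons a xs')
  have "foldl h a xs' \<in> I" using assms(3) Cons by (auto intro: foldl_closed assms(2))
  then show ?thesis using Cons foldl_eq_foldl1[OF assms(1,2) _ assms(4,5)] by simp
qed

lemma associative_fun_eq_foldl1:
  assumes "associative_fun I g" and "xs \<in> lists I" "length xs \<ge> 2"
  shows "g xs = foldl1 (\<lambda>a b. g [a, b]) xs"
proof (cases "length xs = 2")
  case True
  then obtain a b where "xs = [a, b]"
    by (auto simp: numeral_2_eq_2 length_Suc_conv)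
  then show ?thesis by simp
next
  case False
  then have "length xs > 2" using assms(3) by simp
  then have "g xs = foldl (\<lambda>a b. g [a, b]) (hd xs) (tl xs)"
    using assms(1,2) unfolding associative_fun_def by blast
  then show ?thesis using \<open>length xs > 2\<close> by (cases xs) auto
qed

definition substitution_invariant :: "real set \<Rightarrow> (real list \<Rightarrow> real) \<Rightarrow> bool" where
  "substitution_invariant I g \<longleftrightarrow>
     (\<forall>xs\<in>lists I. \<forall>ys\<in>lists I. \<forall>zs\<in>lists I.
        gstr g (xs @ gstr g ys @ zs) = gstr g (xs @ ys @ zs))"

lemma gstr_closed: "maps_into I g \<Longrightarrow> xs \<in> lists I \<Longrightarrow> gstr g xs \<in> lists I"
  unfolding gstr_def maps_into_def by auto

lemma associative_fun_substitution_invariant: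
  assumes "maps_into I g" and "associative_fun I g"
  shows "substitution_invariant I g"
  unfolding substitution_invariant_def
proof (intro ballI)
  fix xs ys zs assume xs: "xs \<in> lists I" and ys: "ys \<in> lists I" and zs: "zs \<in> lists I"
  define h where "h = (\<lambda>a b. g [a, b])"
  have closed: "\<And>a b. a \<in> I \<Longrightarrow> b \<in> I \<Longrightarrow> h a b \<in> I"
    using assms(1) unfolding maps_into_def h_def by auto
  have assoc: "assoc_binary I h" using assms(2) unfolding associative_fun_def h_def by simp
  consider "ys = []" | y where "ys = [y]" | "xs @ zs = []" "ys \<noteq> []"
    | "length ys \<ge> 2" "xs @ zs \<noteq> []"
  proof (cases ys rule: remdups_adj.cases)
    case (3 a b rest)
    then show ?thesis by (cases "xs @ zs = []") (auto intro: that)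
  qed (auto intro: that)
  then show "gstr g (xs @ gstr g ys @ zs) = gstr g (xs @ ys @ zs)"
  proof cases
    case 1
    then show ?thesis by (simp add: gstr_def)
  next
    case (2 y)
    then show ?thesis using assms(2) xs ys zs unfolding associative_fun_def by (simp add: gstr_def)
  next
    case 3
    then show ?thesis using assms(2) ys unfolding associative_fun_def by simp
  next
    case 4
    have gys: "g ys = foldl1 h ys" using associative_fun_eq_foldl1[OF assms(2) ys 4(1)] h_def by simp
    have yne: "ys \<noteq> []" using 4(1) by auto
    then have "g ys \<in> I" using assms(1) ys unfolding maps_into_def by blast
    moreover have "length (xs @ [g ys] @ zs) \<ge> 2" using 4(2) by (cases xs) (auto simp: Suc_le_eq)
    ultimately have "g (xs @ [g ys] @ zs) = foldl1 h (xs @ [foldl1 h ys] @ zs)"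
      using associative_fun_eq_foldl1[OF assms(2)] xs zs gys h_def by simp
    also have "\<dots> = foldl1 h (xs @ ys @ zs)"
      using foldl1_flatten[OF assoc closed xs ys yne] by simp
    also have "\<dots> = g (xs @ ys @ zs)"
      using associative_fun_eq_foldl1[OF assms(2)] xs ys zs 4(1) h_def by simp
    finally show ?thesis using 4(1) by (auto simp: gstr_def)
  qed
qed

lemma substitution_invariant_associative_fun:
  assumes "substitution_invariant I g"
  shows "associative_fun I g"
proof -
  have subst: "gstr g (xs @ gstr g ys @ zs) = gstr g (xs @ ys @ zs)"
    if "xs \<in> lists I" "ys \<in> lists I" "zs \<in> lists I" for xs ys zs
    using assms that unfolding substitution_invariant_def by blast
  have assoc: "assoc_binary I (\<lambda>x y. g [x, y])"
    unfolding assoc_binary_def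
  proof (intro ballI)
    fix x y z assume "x \<in> I" "y \<in> I" "z \<in> I"
    then have "gstr g ([] @ gstr g [x, y] @ [z]) = gstr g ([x] @ gstr g [y, z] @ [])"
      using subst[of "[]" "[x, y]" "[z]"] subst[of "[x]" "[y, z]" "[]"] by simp
    then show "g [g [x, y], z] = g [x, g [y, z]]" by (simp add: gstr_def)
  qed
  have fold: "g (a # ys) = foldl (\<lambda>a b. g [a, b]) a ys"
    if "a \<in> I" "ys \<in> lists I" "ys \<noteq> []" for a ys
    using that
  proof (induction ys rule: rev_induct)
    case (snoc b ys)
    show ?case
    proof (cases "ys = []")
      case False
      have "gstr g ([] @ gstr g (a # ys) @ [b]) = gstr g ((a # ys) @ [b])"
        using subst[of "[]" "a # ys" "[b]"] snoc.prems by simp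
      then show ?thesis using snoc False by (simp add: gstr_def)
    qed simp
  qed simp
  have foldl_form: "g xs = foldl (\<lambda>a b. g [a, b]) (hd xs) (tl xs)"
    if "xs \<in> lists I" "length xs > 2" for xs
    using that fold[of "hd xs" "tl xs"] by (cases xs) force+
  have idem: "gstr g (gstr g xs) = gstr g xs" if "xs \<in> lists I" for xs
    using subst[of "[]" xs "[]"] that by simp
  have single: "gstr g (xs @ [g [y]] @ zs) = gstr g (xs @ [y] @ zs)"
    if "xs \<in> lists I" "y \<in> I" "zs \<in> lists I" for xs y zs
    using subst[of xs "[y]" zs] that by (simp add: gstr_def)
  show ?thesis unfolding associative_fun_def using assoc foldl_form idem single by blast
qed

lemma substitution_invariant_iff_any_position:
  "substitution_invariant I g \<longleftrightarrow>
     (\<forall>xs\<in>lists I. \<forall>ys\<in>lists I. \<forall>zs\<in>lists I.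
        \<forall>xs'\<in>lists I. \<forall>ys'\<in>lists I. \<forall>zs'\<in>lists I.
          xs @ ys @ zs = xs' @ ys' @ zs' \<longrightarrow>
          gstr g (xs @ gstr g ys @ zs) = gstr g (xs' @ gstr g ys' @ zs'))"
    (is "_ \<longleftrightarrow> ?any_position")
proof
  assume "substitution_invariant I g"
  then have subst: "gstr g (xs @ gstr g ys @ zs) = gstr g (xs @ ys @ zs)"
    if "xs \<in> lists I" "ys \<in> lists I" "zs \<in> lists I" for xs ys zs
    using that unfolding substitution_invariant_def by blast
  show ?any_position
    by (intro ballI impI) (simp only: subst)
next
  assume H: ?any_position
  show "substitution_invariant I g"
    unfolding substitution_invariant_def
  proof (intro ballI)
    fix xs ys zs assume "xs \<in> lists I" "ys \<in> lists I" "zs \<in> lists I"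
    then show "gstr g (xs @ gstr g ys @ zs) = gstr g (xs @ ys @ zs)"
      using H[rule_format, of xs ys zs "xs @ ys" "[]" zs] by (simp add: gstr_def)
  qed
qed

lemma substitution_invariant_iff_blockwise:
  assumes "maps_into I g"
  shows "substitution_invariant I g \<longleftrightarrow>
     (\<forall>xs\<in>lists I. \<forall>ys\<in>lists I. gstr g (gstr g xs @ gstr g ys) = gstr g (xs @ ys))"
    (is "_ \<longleftrightarrow> ?blockwise")
proof
  assume "substitution_invariant I g"
  then have subst: "gstr g (xs @ gstr g ys @ zs) = gstr g (xs @ ys @ zs)"
    if "xs \<in> lists I" "ys \<in> lists I" "zs \<in> lists I" for xs ys zs
    using that unfolding substitution_invariant_def by blast
  show ?blockwise
  proof (intro ballI)
    fix xs ys assume xs: "xs \<in> lists I" and ys: "ys \<in> lists I"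
    have "gstr g (gstr g xs @ gstr g ys) = gstr g (gstr g xs @ ys)"
      using subst[OF gstr_closed[OF assms xs] ys, of "[]"] by simp
    also have "\<dots> = gstr g (xs @ ys)" using subst[of "[]" xs ys] xs ys by simp
    finally show "gstr g (gstr g xs @ gstr g ys) = gstr g (xs @ ys)" .
  qed
next
  assume ?blockwise
  then have block: "gstr g (gstr g xs @ gstr g ys) = gstr g (xs @ ys)"
    if "xs \<in> lists I" "ys \<in> lists I" for xs ys
    using that by blast
  have idem: "gstr g (gstr g xs) = gstr g xs" if "xs \<in> lists I" for xs
    using block[OF that, of "[]"] by (simp add: gstr_def)
  show "substitution_invariant I g"
    unfolding substitution_invariant_def
  proof (intro ballI)
    fix xs ys zs assume xs: "xs \<in> lists I" and ys: "ys \<in> lists I" and zs: "zs \<in> lists I"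
    have gys: "gstr g ys \<in> lists I" using gstr_closed[OF assms ys] .
    have tail: "gstr g (gstr g ys @ zs) = gstr g (ys @ zs)"
      using block[OF gys zs] idem[OF ys] block[OF ys zs] by simp
    have "gstr g (xs @ gstr g ys @ zs) = gstr g (gstr g xs @ gstr g (gstr g ys @ zs))"
      using block[OF xs, of "gstr g ys @ zs"] gys zs by simp
    also have "\<dots> = gstr g (xs @ ys @ zs)"
      using tail block[OF xs, of "ys @ zs"] ys zs by simp
    finally show "gstr g (xs @ gstr g ys @ zs) = gstr g (xs @ ys @ zs)" .
  qed
qed

theorem proposition2p2:
  fixes I :: "real set" and g :: "real list \<Rightarrow> real"
  assumes "is_interval I" and "\<exists>a\<in>I. \<exists>b\<in>I. a \<noteq> b"
    and "maps_into I g"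
  shows "(associative_fun I g
          \<longleftrightarrow> (\<forall>xs\<in>lists I. \<forall>ys\<in>lists I. \<forall>zs\<in>lists I.
               \<forall>xs'\<in>lists I. \<forall>ys'\<in>lists I. \<forall>zs'\<in>lists I.
                 xs @ ys @ zs = xs' @ ys' @ zs' \<longrightarrow>
                 gstr g (xs @ gstr g ys @ zs) = gstr g (xs' @ gstr g ys' @ zs')))
       \<and> (associative_fun I g
          \<longleftrightarrow> (\<forall>xs\<in>lists I. \<forall>ys\<in>lists I. \<forall>zs\<in>lists I.
                 gstr g (xs @ gstr g ys @ zs) = gstr g (xs @ ys @ zs)))
       \<and> (associative_fun I g
          \<longleftrightarrow> (\<forall>xs\<in>lists I. \<forall>ys\<in>lists I.
                 gstr g (gstr g xs @ gstr g ys) = gstr g (xs @ ys)))"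
proof -
  have "associative_fun I g \<longleftrightarrow> substitution_invariant I g"
    using associative_fun_substitution_invariant[OF assms(3)]
      substitution_invariant_associative_fun by blast
  then show ?thesis
    unfolding substitution_invariant_iff_any_position[symmetric]
      substitution_invariant_iff_blockwise[OF assms(3), symmetric]
    by (simp only: substitution_invariant_def)
qed

end
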